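(* Under the standing assumptions below, fix $i\in P$. Then the family $\{\,t^{\,i-r}e^r_j : r\in P,\ r<i,\ 1\le j\le b_r\,\}$ (indexed by the pairs $(r,j)$) is $R$-linearly independent in $M_i$.
   Context: Standing assumptions: $R$ is a principal ideal domain; $P$ is a lattice with a compatible abelian group structure ($(P,+,0)$ abelian group, $a\le b\Rightarrow a+c\le b+c$). $U_0=\{s\in P:s\ge 0\}$, $R[U_0]$ the monoid ring (finite sums $\sum c_st^s$, $c_s\in R$), graded by $\deg(ct^s)=s$. $M=\bigoplus_{a\in P}M_a$ is a $P$-graded $R[U_0]$-module (persistence module) that is graded projective, with each $M_a$ a finitely generated $R$-module. For $r\in P$, $D_r=\sum_{q<r}t^{\,r-q}M_q\subseteq M_r$; the quotient $M_r/D_r$ is a free $R$-module of finite rank $b_r$, and for each $r$ one fixes elements $e^r_1,\dots,e^r_{b_r}\in M_r\setminus D_r$ whose classes form an $R$-basis of $M_r/D_r$. *)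

theory Defs
  imports Main "HOL-Library.Lattice_Algebras" "HOL-Library.Product_Plus" "HOL-Library.Function_Algebras"
begin

definition is_ideal :: "'r::comm_ring_1 set \<Rightarrow> bool" where
  "is_ideal I \<longleftrightarrow> 0 \<in> I \<and> (\<forall>x\<in>I. \<forall>y\<in>I. x + y \<in> I) \<and> (\<forall>x\<in>I. \<forall>r. r * x \<in> I)"

definition is_pid :: "'r::idom itself \<Rightarrow> bool" where
  "is_pid _ \<longleftrightarrow> (\<forall>I::'r set. is_ideal I \<longrightarrow> (\<exists>a. I = {a * x | x. True}))"

text \<open>A P-graded R[U0]-module is given by its homogeneous components G a (sets in an
  ambient abelian group type), the R-scalar action sm, and the action of the monomials:
  act a b x = t^(b-a) x for x in G a and a \<le> b.\<close>

definition gmod :: "('p::lattice_ab_group_add \<Rightarrow> 'm::ab_group_add set) \<Rightarrow> ('r::comm_ring_1 \<Rightarrow> 'm \<Rightarrow> 'm)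
     \<Rightarrow> ('p \<Rightarrow> 'p \<Rightarrow> 'm \<Rightarrow> 'm) \<Rightarrow> bool" where
  "gmod G sm act \<longleftrightarrow>
     (\<forall>a. 0 \<in> G a \<and> (\<forall>x\<in>G a. \<forall>y\<in>G a. x + y \<in> G a) \<and> (\<forall>x\<in>G a. - x \<in> G a)
        \<and> (\<forall>x\<in>G a. \<forall>r. sm r x \<in> G a)
        \<and> (\<forall>x\<in>G a. \<forall>y\<in>G a. \<forall>r. sm r (x + y) = sm r x + sm r y)
        \<and> (\<forall>x\<in>G a. \<forall>r s. sm (r + s) x = sm r x + sm s x)
        \<and> (\<forall>x\<in>G a. \<forall>r s. sm (r * s) x = sm r (sm s x))
        \<and> (\<forall>x\<in>G a. sm 1 x = x)
        \<and> (\<forall>x\<in>G a. act a a x = x))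
   \<and> (\<forall>a b. a \<le> b \<longrightarrow>
        (\<forall>x\<in>G a. act a b x \<in> G b)
        \<and> (\<forall>x\<in>G a. \<forall>y\<in>G a. act a b (x + y) = act a b x + act a b y)
        \<and> (\<forall>x\<in>G a. \<forall>r. act a b (sm r x) = sm r (act a b x)))
   \<and> (\<forall>a b c. a \<le> b \<longrightarrow> b \<le> c \<longrightarrow> (\<forall>x\<in>G a. act b c (act a b x) = act a c x))"

definition ghom :: "('p::lattice_ab_group_add \<Rightarrow> 'm::ab_group_add set) \<Rightarrow> ('r::comm_ring_1 \<Rightarrow> 'm \<Rightarrow> 'm)
     \<Rightarrow> ('p \<Rightarrow> 'p \<Rightarrow> 'm \<Rightarrow> 'm)
     \<Rightarrow> ('p \<Rightarrow> 'n::ab_group_add set) \<Rightarrow> ('r \<Rightarrow> 'n \<Rightarrow> 'n) \<Rightarrow> ('p \<Rightarrow> 'p \<Rightarrow> 'n \<Rightarrow> 'n)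
     \<Rightarrow> ('p \<Rightarrow> 'm \<Rightarrow> 'n) \<Rightarrow> bool" where
  "ghom G sm act H smH actH f \<longleftrightarrow>
     (\<forall>a. (\<forall>x\<in>G a. f a x \<in> H a)
        \<and> (\<forall>x\<in>G a. \<forall>y\<in>G a. f a (x + y) = f a x + f a y)
        \<and> (\<forall>x\<in>G a. \<forall>r. f a (sm r x) = smH r (f a x)))
   \<and> (\<forall>a b. a \<le> b \<longrightarrow> (\<forall>x\<in>G a. f b (act a b x) = actH a b (f a x)))"

text \<open>The test modules are carried by the fixed type
  'm \<times> ('p \<times> 'm \<Rightarrow> 'r), which is large enough to contain both a copy of M and
  the canonical graded free cover of M.\<close>
definition graded_projective :: "('p::lattice_ab_group_add \<Rightarrow> 'm::ab_group_add set)
     \<Rightarrow> ('r::comm_ring_1 \<Rightarrow> 'm \<Rightarrow> 'm) \<Rightarrow> ('p \<Rightarrow> 'p \<Rightarrow> 'm \<Rightarrow> 'm) \<Rightarrow> bool" where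
  "graded_projective G sm act \<longleftrightarrow>
     (\<forall>(N :: 'p \<Rightarrow> ('m \<times> ('p \<times> 'm \<Rightarrow> 'r)) set) smN actN
        (N' :: 'p \<Rightarrow> ('m \<times> ('p \<times> 'm \<Rightarrow> 'r)) set) smN' actN' g f.
        gmod N smN actN \<longrightarrow> gmod N' smN' actN' \<longrightarrow>
        ghom N smN actN N' smN' actN' g \<longrightarrow> (\<forall>a. g a ` N a = N' a) \<longrightarrow>
        ghom G sm act N' smN' actN' f \<longrightarrow>
        (\<exists>h. ghom G sm act N smN actN h \<and> (\<forall>a. \<forall>x\<in>G a. g a (h a x) = f a x)))"

definition fin_gen_R :: "'m::ab_group_add set \<Rightarrow> ('r::comm_ring_1 \<Rightarrow> 'm \<Rightarrow> 'm) \<Rightarrow> bool" where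
  "fin_gen_R A sm \<longleftrightarrow> (\<exists>S. finite S \<and> S \<subseteq> A \<and>
      (\<forall>x\<in>A. \<exists>c. x = (\<Sum>s\<in>S. sm (c s) s)))"

text \<open>D_r = sum over q < r of t^(r-q) M_q (sum of submodules = set of finite sums).\<close>
definition Dsub :: "('p::lattice_ab_group_add \<Rightarrow> 'm::ab_group_add set) \<Rightarrow> ('p \<Rightarrow> 'p \<Rightarrow> 'm \<Rightarrow> 'm)
     \<Rightarrow> 'p \<Rightarrow> 'm set" where
  "Dsub G act r = {(\<Sum>(q, y)\<in>S. act q r y) | S. finite S \<and> (\<forall>(q, y)\<in>S. q < r \<and> y \<in> G q)}"

definition quot_basis :: "('p::lattice_ab_group_add \<Rightarrow> 'm::ab_group_add set) \<Rightarrow> ('r::comm_ring_1 \<Rightarrow> 'm \<Rightarrow> 'm)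
     \<Rightarrow> ('p \<Rightarrow> 'p \<Rightarrow> 'm \<Rightarrow> 'm) \<Rightarrow> 'p \<Rightarrow> nat \<Rightarrow> (nat \<Rightarrow> 'm) \<Rightarrow> bool" where
  "quot_basis G sm act r n e \<longleftrightarrow>
     (\<forall>j\<in>{1..n}. e j \<in> G r \<and> e j \<notin> Dsub G act r)
   \<and> (\<forall>x\<in>G r. \<exists>c. x - (\<Sum>j=1..n. sm (c j) (e j)) \<in> Dsub G act r)
   \<and> (\<forall>c. (\<Sum>j=1..n. sm (c j) (e j)) \<in> Dsub G act r \<longrightarrow> (\<forall>j\<in>{1..n}. c j = 0))"

end

theory Submission
  imports Defs
begin

(* Lifting the identity of M against the graded free cover of M (one generator in degree q for
   every y in M_q) gives a graded section h: each x in M_a is written as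
   x = sum phi(q,y) t^(a-q) y with coefficients phi = h_a x supported in degrees q <= a, and
   h commutes with multiplication by t. Apply h to a relation sum c(r,j) t^(i-r) e^r_j = 0 and
   read off the coefficients in a degree r0 that is maximal among the r with some c(r,j) ~= 0:
   only the terms with r = r0 contribute there, so x = sum_j c(r0,j) e^r0_j has no
   coefficients in degree r0, i.e. x lies in D_r0. Independence of the classes of the e^r0_j
   in M_r0/D_r0 then forces all c(r0,j) = 0, a contradiction. *)

locale graded_module =
  fixes G :: "'p::lattice_ab_group_add \<Rightarrow> 'm::ab_group_add set"
    and sm :: "'r::comm_ring_1 \<Rightarrow> 'm \<Rightarrow> 'm"
    and act :: "'p \<Rightarrow> 'p \<Rightarrow> 'm \<Rightarrow> 'm"
  assumes is_gmod: "gmod G sm act"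
begin

lemma zero_closed: "0 \<in> G a"
  and add_closed: "x \<in> G a \<Longrightarrow> y \<in> G a \<Longrightarrow> x + y \<in> G a"
  and smult_closed: "x \<in> G a \<Longrightarrow> sm r x \<in> G a"
  and act_closed: "a \<le> b \<Longrightarrow> x \<in> G a \<Longrightarrow> act a b x \<in> G b"
  and smult_add_right: "x \<in> G a \<Longrightarrow> y \<in> G a \<Longrightarrow> sm r (x + y) = sm r x + sm r y"
  and smult_add_left: "x \<in> G a \<Longrightarrow> sm (r + s) x = sm r x + sm s x"
  and smult_smult: "x \<in> G a \<Longrightarrow> sm (r * s) x = sm r (sm s x)"
  and smult_one: "x \<in> G a \<Longrightarrow> sm 1 x = x"
  and act_self: "x \<in> G a \<Longrightarrow> act a a x = x"
  and act_add: "a \<le> b \<Longrightarrow> x \<in> G a \<Longrightarrow> y \<in> G a \<Longrightarrow> act a b (x + y) = act a b x + act a b y"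
  and act_smult: "a \<le> b \<Longrightarrow> x \<in> G a \<Longrightarrow> act a b (sm r x) = sm r (act a b x)"
  and act_act: "a \<le> b \<Longrightarrow> b \<le> c \<Longrightarrow> x \<in> G a \<Longrightarrow> act b c (act a b x) = act a c x"
  using is_gmod by (simp_all add: gmod_def)

lemma smult_zero_left: "x \<in> G a \<Longrightarrow> sm 0 x = 0"
  using smult_add_left[of x a 0 0] by simp

lemma act_zero: "a \<le> b \<Longrightarrow> act a b 0 = 0"
  using act_add[of a b 0 0] zero_closed[of a] by simp

lemma sum_closed: "finite K \<Longrightarrow> (\<And>k. k \<in> K \<Longrightarrow> f k \<in> G a) \<Longrightarrow> sum f K \<in> G a"
  by (induction K rule: finite_induct) (auto intro: add_closed zero_closed)

lemma smult_sum:
  "finite K \<Longrightarrow> (\<And>k. k \<in> K \<Longrightarrow> f k \<in> G a) \<Longrightarrow> sm r (sum f K) = (\<Sum>k\<in>K. sm r (f k))"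
proof (induction K rule: finite_induct)
  case empty
  then show ?case
    using smult_add_right[of 0 a 0 r] zero_closed[of a] by simp
next
  case (insert k K)
  then have "f k \<in> G a" "sum f K \<in> G a"
    by (auto intro: sum_closed)
  with insert show ?case
    by (simp add: smult_add_right[of "f k" a "sum f K" r])
qed

lemma act_sum:
  "finite K \<Longrightarrow> a \<le> b \<Longrightarrow> (\<And>k. k \<in> K \<Longrightarrow> f k \<in> G a)
    \<Longrightarrow> act a b (sum f K) = (\<Sum>k\<in>K. act a b (f k))"
  by (induction K rule: finite_induct) (simp_all add: act_zero act_add sum_closed)

lemma sum_act_mem_Dsub:
  assumes "finite K" and "\<And>k. k \<in> K \<Longrightarrow> q k < r \<and> y k \<in> G (q k)"
  shows "(\<Sum>k\<in>K. act (q k) r (y k)) \<in> Dsub G act r"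
proof -
  \<comment> \<open>Dsub sums over a set of pairs (q, y), so the terms of equal degree are merged first.\<close>
  define Y where "Y p = (\<Sum>k\<in>{k\<in>K. q k = p}. y k)" for p
  have Y_closed: "Y p \<in> G p" for p
    unfolding Y_def using assms by (auto intro: sum_closed)
  have "(\<Sum>k\<in>K. act (q k) r (y k)) = (\<Sum>p\<in>q ` K. \<Sum>k\<in>{k\<in>K. q k = p}. act p r (y k))"
    unfolding sum.image_gen[OF \<open>finite K\<close>, of _ q] by (intro sum.cong) auto
  also have "\<dots> = (\<Sum>p\<in>q ` K. act p r (Y p))"
    unfolding Y_def using assms by (intro sum.cong refl act_sum[symmetric]) (auto intro: less_imp_le)
  also have "\<dots> = (\<Sum>(p, z)\<in>(\<lambda>p. (p, Y p)) ` q ` K. act p r z)"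
    by (subst sum.reindex) (auto simp: inj_on_def)
  finally show ?thesis
    unfolding Dsub_def using assms Y_closed by blast
qed

lemma ghom_zero:
  assumes "ghom G sm act H smH actH f"
  shows "f a 0 = 0"
  using assms zero_closed[of a] unfolding ghom_def by (metis add_cancel_right_right)

lemma ghom_sum:
  assumes "ghom G sm act H smH actH f" and "finite K" and "\<And>k. k \<in> K \<Longrightarrow> g k \<in> G a"
  shows "f a (sum g K) = (\<Sum>k\<in>K. f a (g k))"
  using assms(2,3)
proof (induction K rule: finite_induct)
  case empty
  then show ?case using ghom_zero[OF assms(1)] by simp
next
  case (insert k K)
  then have "g k \<in> G a" "sum g K \<in> G a"
    by (auto intro: sum_closed)
  with insert assms(1) show ?case
    unfolding ghom_def by simp
qed

end

(* The lifting property of graded_projective is only available against modules carried by the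
   type 'm * ('p * 'm => 'r). The free cover of M lives in the second component, as finitely
   supported coefficient functions on the generators (q, y) with y in G q; a generator of
   degree q spans a copy of R in every degree a >= q, so t^(b-a) acts on it as the identity.
   The first component carries a copy of M. *)

definition free_coeffs :: "('p::order \<Rightarrow> 'm set) \<Rightarrow> 'p \<Rightarrow> ('p \<times> 'm \<Rightarrow> 'r::zero) \<Rightarrow> bool" where
  "free_coeffs G a \<phi> \<longleftrightarrow>
     finite {k. \<phi> k \<noteq> 0} \<and> (\<forall>k. \<phi> k \<noteq> 0 \<longrightarrow> fst k \<le> a \<and> snd k \<in> G (fst k))"

definition free_cover ::
    "('p::lattice_ab_group_add \<Rightarrow> 'm::ab_group_add set) \<Rightarrow> 'p \<Rightarrow> ('m \<times> ('p \<times> 'm \<Rightarrow> 'r::comm_ring_1)) set" where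
  "free_cover G a = {(0, \<phi>) | \<phi>. free_coeffs G a \<phi>}"

definition free_smult ::
    "'r::comm_ring_1 \<Rightarrow> 'm::ab_group_add \<times> ('p \<times> 'm \<Rightarrow> 'r) \<Rightarrow> 'm \<times> ('p \<times> 'm \<Rightarrow> 'r)" where
  "free_smult r z = (0, \<lambda>k. r * snd z k)"

definition copy_module ::
    "('p::lattice_ab_group_add \<Rightarrow> 'm::ab_group_add set) \<Rightarrow> 'p \<Rightarrow> ('m \<times> ('p \<times> 'm \<Rightarrow> 'r::comm_ring_1)) set" where
  "copy_module G a = {(x, 0) | x. x \<in> G a}"

definition copy_smult ::
    "('r::comm_ring_1 \<Rightarrow> 'm::ab_group_add \<Rightarrow> 'm) \<Rightarrow> 'r \<Rightarrow> 'm \<times> ('p \<times> 'm \<Rightarrow> 'r) \<Rightarrow> 'm \<times> ('p \<times> 'm \<Rightarrow> 'r)" where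
  "copy_smult sm r z = (sm r (fst z), 0)"

definition copy_act ::
    "('p \<Rightarrow> 'p \<Rightarrow> 'm::ab_group_add \<Rightarrow> 'm) \<Rightarrow> 'p \<Rightarrow> 'p \<Rightarrow> 'm \<times> ('p \<times> 'm \<Rightarrow> 'r::comm_ring_1) \<Rightarrow> 'm \<times> ('p \<times> 'm \<Rightarrow> 'r)" where
  "copy_act act a b z = (act a b (fst z), 0)"

definition lincomb ::
    "('r::comm_ring_1 \<Rightarrow> 'm::ab_group_add \<Rightarrow> 'm) \<Rightarrow> ('p \<Rightarrow> 'p \<Rightarrow> 'm \<Rightarrow> 'm) \<Rightarrow> 'p \<Rightarrow> ('p \<times> 'm \<Rightarrow> 'r) \<Rightarrow> 'm" where
  "lincomb sm act a \<phi> = (\<Sum>k\<in>{k. \<phi> k \<noteq> 0}. act (fst k) a (sm (\<phi> k) (snd k)))"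

definition cover_proj ::
    "('r::comm_ring_1 \<Rightarrow> 'm::ab_group_add \<Rightarrow> 'm) \<Rightarrow> ('p \<Rightarrow> 'p \<Rightarrow> 'm \<Rightarrow> 'm) \<Rightarrow> 'p
      \<Rightarrow> 'm \<times> ('p \<times> 'm \<Rightarrow> 'r) \<Rightarrow> 'm \<times> ('p \<times> 'm \<Rightarrow> 'r)" where
  "cover_proj sm act a z = (lincomb sm act a (snd z), 0)"

lemma free_coeffs_add:
  fixes \<phi> \<psi> :: "'p::order \<times> 'm \<Rightarrow> 'r::monoid_add"
  assumes "free_coeffs G a \<phi>" and "free_coeffs G a \<psi>"
  shows "free_coeffs G a (\<phi> + \<psi>)"
proof -
  have "{k. (\<phi> + \<psi>) k \<noteq> 0} \<subseteq> {k. \<phi> k \<noteq> 0} \<union> {k. \<psi> k \<noteq> 0}"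
    by auto
  with assms show ?thesis
    unfolding free_coeffs_def by (auto intro: finite_subset)
qed

lemma free_coeffs_mono: "free_coeffs G a \<phi> \<Longrightarrow> a \<le> b \<Longrightarrow> free_coeffs G b \<phi>"
  unfolding free_coeffs_def by (meson order_trans)

lemma free_coeffs_supp_subset:
  "free_coeffs G a \<phi> \<Longrightarrow> (\<And>k. \<psi> k \<noteq> 0 \<Longrightarrow> \<phi> k \<noteq> 0) \<Longrightarrow> free_coeffs G a \<psi>"
  unfolding free_coeffs_def by (metis (mono_tags, lifting) finite_subset mem_Collect_eq subsetI)

lemma free_cover_add: "z \<in> free_cover G a \<Longrightarrow> w \<in> free_cover G a \<Longrightarrow> z + w \<in> free_cover G a"
  unfolding free_cover_def by (auto intro: free_coeffs_add)

lemma free_cover_uminus: "z \<in> free_cover G a \<Longrightarrow> - z \<in> free_cover G a"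
  unfolding free_cover_def by (auto elim!: free_coeffs_supp_subset)

lemma free_cover_smult: "z \<in> free_cover G a \<Longrightarrow> free_smult r z \<in> free_cover G a"
  unfolding free_cover_def free_smult_def by (auto elim!: free_coeffs_supp_subset)

lemma free_cover_mono: "z \<in> free_cover G a \<Longrightarrow> a \<le> b \<Longrightarrow> z \<in> free_cover G b"
  unfolding free_cover_def by (auto intro: free_coeffs_mono)

lemma free_smult_add_right: "free_smult r (z + w) = free_smult r z + free_smult r w"
  and free_smult_add_left: "free_smult (r + s) z = free_smult r z + free_smult s z"
  and free_smult_smult: "free_smult (r * s) z = free_smult r (free_smult s z)"
  by (simp_all add: free_smult_def fun_eq_iff algebra_simps)

lemma gmod_free_cover: "gmod (free_cover G) free_smult (\<lambda>_ _ z. z)"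
proof -
  have "0 \<in> free_cover G a" for a
    unfolding free_cover_def free_coeffs_def by (auto simp: zero_prod_def zero_fun_def)
  moreover have "free_smult 1 z = z" if "z \<in> free_cover G a" for z a
    using that unfolding free_cover_def free_smult_def by auto
  ultimately show ?thesis
    unfolding gmod_def
    by (auto simp: free_cover_add free_cover_uminus free_cover_smult free_smult_add_right
        free_smult_add_left free_smult_smult intro: free_cover_mono)
qed

context graded_module
begin

lemma gmod_copy_module:
  "gmod (copy_module G :: 'p \<Rightarrow> ('m \<times> ('p \<times> 'm \<Rightarrow> 'r)) set) (copy_smult sm) (copy_act act)"
  using is_gmod unfolding gmod_def copy_module_def copy_smult_def copy_act_def
  by (auto simp: zero_prod_def)

lemma ghom_copy:
  "ghom G sm act (copy_module G :: 'p \<Rightarrow> ('m \<times> ('p \<times> 'm \<Rightarrow> 'r)) set) (copy_smult sm) (copy_act act)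
     (\<lambda>_ x. (x, 0))"
  unfolding ghom_def copy_module_def copy_smult_def copy_act_def by auto

lemma lincomb_eq_sum:
  assumes "finite S" and "{k. \<phi> k \<noteq> 0} \<subseteq> S" and "\<And>k. k \<in> S \<Longrightarrow> fst k \<le> a \<and> snd k \<in> G (fst k)"
  shows "lincomb sm act a \<phi> = (\<Sum>k\<in>S. act (fst k) a (sm (\<phi> k) (snd k)))"
  unfolding lincomb_def
proof (rule sum.mono_neutral_left[OF assms(1,2)], intro ballI)
  fix k
  assume "k \<in> S - {k. \<phi> k \<noteq> 0}"
  with assms(3)[of k] show "act (fst k) a (sm (\<phi> k) (snd k)) = 0"
    by (simp add: smult_zero_left[of _ "fst k"] act_zero)
qed

lemma lincomb_closed: "free_coeffs G a \<phi> \<Longrightarrow> lincomb sm act a \<phi> \<in> G a"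
  unfolding lincomb_def free_coeffs_def by (auto intro!: sum_closed act_closed smult_closed)

lemma lincomb_add:
  assumes "free_coeffs G a \<phi>" and "free_coeffs G a \<psi>"
  shows "lincomb sm act a (\<phi> + \<psi>) = lincomb sm act a \<phi> + lincomb sm act a \<psi>"
proof -
  define S where "S = {k. \<phi> k \<noteq> 0} \<union> {k. \<psi> k \<noteq> 0}"
  have S: "finite S" "\<And>k. k \<in> S \<Longrightarrow> fst k \<le> a \<and> snd k \<in> G (fst k)"
    using assms unfolding S_def free_coeffs_def by auto
  have "lincomb sm act a (\<phi> + \<psi>) = (\<Sum>k\<in>S. act (fst k) a (sm ((\<phi> + \<psi>) k) (snd k)))"
    using S by (intro lincomb_eq_sum) (auto simp: S_def)
  also have "\<dots> = (\<Sum>k\<in>S. act (fst k) a (sm (\<phi> k) (snd k)) + act (fst k) a (sm (\<psi> k) (snd k)))"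
  proof (rule sum.cong[OF refl])
    fix k
    assume "k \<in> S"
    with S(2)[of k] show "act (fst k) a (sm ((\<phi> + \<psi>) k) (snd k))
        = act (fst k) a (sm (\<phi> k) (snd k)) + act (fst k) a (sm (\<psi> k) (snd k))"
      by (simp add: smult_add_left[of _ "fst k"] act_add smult_closed)
  qed
  also have "\<dots> = lincomb sm act a \<phi> + lincomb sm act a \<psi>"
    using lincomb_eq_sum[OF S(1) _ S(2), of \<phi>] lincomb_eq_sum[OF S(1) _ S(2), of \<psi>]
    by (simp add: sum.distrib S_def)
  finally show ?thesis .
qed

lemma lincomb_smult:
  assumes "free_coeffs G a \<phi>"
  shows "lincomb sm act a (\<lambda>k. r * \<phi> k) = sm r (lincomb sm act a \<phi>)"
proof -
  have supp: "finite {k. \<phi> k \<noteq> 0}" "\<And>k. \<phi> k \<noteq> 0 \<Longrightarrow> fst k \<le> a \<and> snd k \<in> G (fst k)"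
    using assms unfolding free_coeffs_def by auto
  have "lincomb sm act a (\<lambda>k. r * \<phi> k) = (\<Sum>k | \<phi> k \<noteq> 0. act (fst k) a (sm (r * \<phi> k) (snd k)))"
    using supp by (intro lincomb_eq_sum) auto
  also have "\<dots> = (\<Sum>k | \<phi> k \<noteq> 0. sm r (act (fst k) a (sm (\<phi> k) (snd k))))"
  proof (rule sum.cong[OF refl])
    fix k
    assume "k \<in> {k. \<phi> k \<noteq> 0}"
    with supp(2)[of k] show "act (fst k) a (sm (r * \<phi> k) (snd k)) = sm r (act (fst k) a (sm (\<phi> k) (snd k)))"
      by (simp add: smult_smult[of _ "fst k"] act_smult smult_closed)
  qed
  also have "\<dots> = sm r (lincomb sm act a \<phi>)"
    unfolding lincomb_def using supp by (intro smult_sum[symmetric]) (auto intro: act_closed smult_closed)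
  finally show ?thesis .
qed

lemma lincomb_act:
  assumes "free_coeffs G a \<phi>" and "a \<le> b"
  shows "act a b (lincomb sm act a \<phi>) = lincomb sm act b \<phi>"
proof -
  have supp: "finite {k. \<phi> k \<noteq> 0}" "\<And>k. \<phi> k \<noteq> 0 \<Longrightarrow> fst k \<le> a \<and> snd k \<in> G (fst k)"
    using assms unfolding free_coeffs_def by auto
  then show ?thesis
    unfolding lincomb_def using \<open>a \<le> b\<close>
    by (subst act_sum) (auto intro!: sum.cong act_act act_closed smult_closed)
qed

lemma lincomb_single:
  assumes "x \<in> G a"
  shows "lincomb sm act a (\<lambda>k. if k = (a, x) then 1 else 0) = x"
proof -
  have "{k. (if k = (a, x) then 1 else 0) \<noteq> (0::'r)} = {(a, x)}"
    by auto
  then show ?thesis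
    unfolding lincomb_def using assms by (simp add: act_self smult_one)
qed

lemma ghom_cover_proj:
  "ghom (free_cover G) free_smult (\<lambda>_ _ z. z)
     (copy_module G :: 'p \<Rightarrow> ('m \<times> ('p \<times> 'm \<Rightarrow> 'r)) set) (copy_smult sm) (copy_act act) (cover_proj sm act)"
  unfolding ghom_def free_cover_def copy_module_def free_smult_def copy_smult_def copy_act_def cover_proj_def
  by (auto simp: lincomb_closed lincomb_add lincomb_smult lincomb_act free_coeffs_mono)

lemma cover_proj_surj:
  "cover_proj sm act a ` free_cover G a = (copy_module G a :: ('m \<times> ('p \<times> 'm \<Rightarrow> 'r)) set)"
proof
  show "cover_proj sm act a ` free_cover G a \<subseteq> copy_module G a"
    using ghom_cover_proj unfolding ghom_def by blast
  show "copy_module G a \<subseteq> cover_proj sm act a ` free_cover G a"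
  proof
    fix z :: "'m \<times> ('p \<times> 'm \<Rightarrow> 'r)"
    assume "z \<in> copy_module G a"
    then obtain x where z: "z = (x, 0)" and x: "x \<in> G a"
      unfolding copy_module_def by auto
    define \<phi> :: "'p \<times> 'm \<Rightarrow> 'r" where "\<phi> k = (if k = (a, x) then 1 else 0)" for k
    have "free_coeffs G a \<phi>"
      unfolding free_coeffs_def \<phi>_def using x by auto
    moreover have "cover_proj sm act a (0, \<phi>) = z"
      unfolding cover_proj_def \<phi>_def z using lincomb_single[OF x] by simp
    ultimately show "z \<in> cover_proj sm act a ` free_cover G a"
      unfolding free_cover_def by force
  qed
qed

lemma graded_projective_section:
  assumes "graded_projective G sm act"
  obtains h :: "'p \<Rightarrow> 'm \<Rightarrow> 'm \<times> ('p \<times> 'm \<Rightarrow> 'r)"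
  where "ghom G sm act (free_cover G) free_smult (\<lambda>_ _ z. z) h"
    and "\<And>a x. x \<in> G a \<Longrightarrow> lincomb sm act a (snd (h a x)) = x"
  using assms[unfolded graded_projective_def, rule_format,
      OF gmod_free_cover gmod_copy_module ghom_cover_proj cover_proj_surj ghom_copy]
  unfolding cover_proj_def by auto

end

lemma sum_fun_apply: "sum f A x = (\<Sum>k\<in>A. f k x)"
  by (induction A rule: infinite_finite_induct) auto

lemma maximal_layer_vanishes:
  fixes \<rho> :: "'k \<Rightarrow> 'p::order" and \<psi> :: "'k \<Rightarrow> 'p \<times> 'b \<Rightarrow> 'r::semiring_0"
  assumes "finite F"
    and "\<And>k q. k \<in> F \<Longrightarrow> \<psi> k q \<noteq> 0 \<Longrightarrow> fst q \<le> \<rho> k"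
    and "\<And>q. (\<Sum>k\<in>F. c k * \<psi> k q) = 0"
    and "k0 \<in> F" and "c k0 \<noteq> 0"
  obtains r0 where "\<exists>k\<in>F. \<rho> k = r0 \<and> c k \<noteq> 0"
    and "\<And>m. (\<Sum>k\<in>{k\<in>F. \<rho> k = r0}. c k * \<psi> k (r0, m)) = 0"
proof -
  define S where "S = \<rho> ` {k\<in>F. c k \<noteq> 0}"
  have "finite S" "S \<noteq> {}"
    using assms unfolding S_def by auto
  then obtain r0 where "r0 \<in> S" and r0_max: "\<And>r. r \<in> S \<Longrightarrow> r0 \<le> r \<Longrightarrow> r0 = r"
    using finite_has_maximal by metis
  have "(\<Sum>k\<in>{k\<in>F. \<rho> k = r0}. c k * \<psi> k (r0, m)) = 0" for m
  proof -
    have "c k * \<psi> k (r0, m) = 0" if "k \<in> F" "\<rho> k \<noteq> r0" for k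
      using that assms(2)[of k "(r0, m)"] r0_max[of "\<rho> k"] unfolding S_def by fastforce
    then have "(\<Sum>k\<in>{k\<in>F. \<rho> k = r0}. c k * \<psi> k (r0, m)) = (\<Sum>k\<in>F. c k * \<psi> k (r0, m))"
      using assms(1) by (intro sum.mono_neutral_left) auto
    with assms(3) show ?thesis
      by simp
  qed
  with \<open>r0 \<in> S\<close> show ?thesis
    using that unfolding S_def by blast
qed

context graded_module
begin

lemma section_coeff_sum:
  assumes "ghom G sm act (free_cover G) free_smult (\<lambda>_ _ z. z) h" and "finite F"
    and "\<And>k. k \<in> F \<Longrightarrow> \<rho> k \<le> i \<and> y k \<in> G (\<rho> k)"
  shows "snd (h i (\<Sum>k\<in>F. sm (c k) (act (\<rho> k) i (y k)))) q = (\<Sum>k\<in>F. c k * snd (h (\<rho> k) (y k)) q)"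
proof -
  have "h i (\<Sum>k\<in>F. sm (c k) (act (\<rho> k) i (y k))) = (\<Sum>k\<in>F. h i (sm (c k) (act (\<rho> k) i (y k))))"
    using assms by (intro ghom_sum) (auto intro: smult_closed act_closed)
  also have "\<dots> = (\<Sum>k\<in>F. free_smult (c k) (h (\<rho> k) (y k)))"
  proof (rule sum.cong[OF refl])
    fix k
    assume "k \<in> F"
    with assms(3) have "\<rho> k \<le> i" "y k \<in> G (\<rho> k)"
      by auto
    with assms(1) show "h i (sm (c k) (act (\<rho> k) i (y k))) = free_smult (c k) (h (\<rho> k) (y k))"
      unfolding ghom_def by (simp add: act_closed)
  qed
  finally show ?thesis
    by (simp add: snd_sum sum_fun_apply free_smult_def)
qed

lemma lincomb_mem_Dsub:
  assumes "free_coeffs G r \<phi>" and "\<And>m. \<phi> (r, m) = 0"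
  shows "lincomb sm act r \<phi> \<in> Dsub G act r"
  unfolding lincomb_def
proof (rule sum_act_mem_Dsub)
  show "finite {k. \<phi> k \<noteq> 0}"
    using assms(1) unfolding free_coeffs_def by blast
  fix k
  assume "k \<in> {k. \<phi> k \<noteq> 0}"
  then have "\<phi> k \<noteq> 0"
    by simp
  with assms(1) have "fst k \<le> r" "snd k \<in> G (fst k)"
    unfolding free_coeffs_def by blast+
  moreover have "fst k \<noteq> r"
    using \<open>\<phi> k \<noteq> 0\<close> assms(2)[of "snd k"] by (metis prod.collapse)
  ultimately show "fst k < r \<and> sm (\<phi> k) (snd k) \<in> G (fst k)"
    by (auto intro: smult_closed)
qed

lemma quot_basis_coeffs_zero:
  assumes "quot_basis G sm act r n e" and "finite K" and "inj_on \<sigma> K" and "\<sigma> ` K \<subseteq> {1..n}"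
    and "(\<Sum>k\<in>K. sm (c k) (e (\<sigma> k))) \<in> Dsub G act r" and "k \<in> K"
  shows "c k = 0"
proof -
  define d where "d j = (if j \<in> \<sigma> ` K then c (the_inv_into K \<sigma> j) else 0)" for j
  have "(\<Sum>j=1..n. sm (d j) (e j)) = (\<Sum>j\<in>\<sigma> ` K. sm (d j) (e j))"
    using assms(1,4) unfolding quot_basis_def
    by (intro sum.mono_neutral_right) (auto simp: d_def smult_zero_left)
  also have "\<dots> = (\<Sum>k\<in>K. sm (c k) (e (\<sigma> k)))"
    using assms(3) by (simp add: sum.reindex d_def the_inv_into_f_f)
  finally have "\<forall>j\<in>{1..n}. d j = 0"
    using assms(1,5) unfolding quot_basis_def by metis
  moreover have "d (\<sigma> k) = c k"
    using assms(3,6) by (simp add: d_def the_inv_into_f_f)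
  ultimately show ?thesis
    using assms(4,6) by auto
qed

lemma ghom_free_coeffs:
  assumes "ghom G sm act (free_cover G) free_smult (\<lambda>_ _ z. z) h" and "x \<in> G a"
  shows "free_coeffs G a (snd (h a x))"
  using assms unfolding ghom_def free_cover_def by fastforce

lemma section_layer_vanishes_imp_Dsub:
  assumes h: "ghom G sm act (free_cover G) free_smult (\<lambda>_ _ z. z) h"
    and h_section: "\<And>x. x \<in> G r \<Longrightarrow> lincomb sm act r (snd (h r x)) = x"
    and "finite K" and y_closed: "\<And>k. k \<in> K \<Longrightarrow> y k \<in> G r"
    and layer: "\<And>m. (\<Sum>k\<in>K. c k * snd (h r (y k)) (r, m)) = 0"
  shows "(\<Sum>k\<in>K. sm (c k) (y k)) \<in> Dsub G act r"
proof -
  define x where "x = (\<Sum>k\<in>K. sm (c k) (act r r (y k)))"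
  have x_eq: "x = (\<Sum>k\<in>K. sm (c k) (y k))"
    unfolding x_def using y_closed by (simp add: act_self)
  have "x \<in> G r"
    unfolding x_eq using \<open>finite K\<close> y_closed by (auto intro: sum_closed smult_closed)
  have "snd (h r x) (r, m) = 0" for m
    unfolding x_def using section_coeff_sum[OF h \<open>finite K\<close>, of "\<lambda>_. r" r y] y_closed layer by simp
  then have "lincomb sm act r (snd (h r x)) \<in> Dsub G act r"
    using lincomb_mem_Dsub ghom_free_coeffs[OF h \<open>x \<in> G r\<close>] by blast
  then show ?thesis
    using h_section[OF \<open>x \<in> G r\<close>] x_eq by simp
qed

lemma shifted_quot_basis_independent:
  assumes "graded_projective G sm act" and qb: "\<And>r. quot_basis G sm act r (b r) (e r)"
    and "finite F" and F_sub: "F \<subseteq> {(r, j). r < i \<and> 1 \<le> j \<and> j \<le> b r}"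
    and relation: "(\<Sum>(r, j)\<in>F. sm (c (r, j)) (act r i (e r j))) = 0"
    and "k0 \<in> F"
  shows "c k0 = 0"
proof (rule ccontr)
  assume "c k0 \<noteq> 0"
  obtain h where h: "ghom G sm act (free_cover G) free_smult (\<lambda>_ _ z. z) h"
    and h_section: "\<And>a x. x \<in> G a \<Longrightarrow> lincomb sm act a (snd (h a x)) = x"
    using graded_projective_section[OF assms(1)] by blast
  have e_closed: "e (fst k) (snd k) \<in> G (fst k)" if "k \<in> F" for k
    using that F_sub qb unfolding quot_basis_def by fastforce
  define \<psi> where "\<psi> k = snd (h (fst k) (e (fst k) (snd k)))" for k
  have \<psi>_supp: "fst q \<le> fst k" if "k \<in> F" and "\<psi> k q \<noteq> 0" for k q
    using ghom_free_coeffs[OF h e_closed[OF that(1)]] that(2) unfolding free_coeffs_def \<psi>_def by blast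
  have \<psi>_relation: "(\<Sum>k\<in>F. c k * \<psi> k q) = 0" for q
  proof -
    have "(\<Sum>k\<in>F. c k * \<psi> k q) = snd (h i (\<Sum>k\<in>F. sm (c k) (act (fst k) i (e (fst k) (snd k))))) q"
      unfolding \<psi>_def using \<open>finite F\<close> F_sub e_closed
      by (intro section_coeff_sum[OF h, symmetric]) auto
    also have "\<dots> = 0"
      using relation ghom_zero[OF h] by (simp add: case_prod_beta)
    finally show ?thesis .
  qed
  obtain r0 where "\<exists>k\<in>F. fst k = r0 \<and> c k \<noteq> 0"
    and layer: "\<And>m. (\<Sum>k\<in>{k\<in>F. fst k = r0}. c k * \<psi> k (r0, m)) = 0"
    using maximal_layer_vanishes[where \<rho> = fst and \<psi> = \<psi>, OF \<open>finite F\<close> \<psi>_supp \<psi>_relation \<open>k0 \<in> F\<close> \<open>c k0 \<noteq> 0\<close>] by blast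
  then obtain k where k: "k \<in> F" "fst k = r0" "c k \<noteq> 0"
    by blast
  define F0 where "F0 = {k\<in>F. fst k = r0}"
  have F0: "finite F0" "inj_on snd F0" "snd ` F0 \<subseteq> {1..b r0}"
    using \<open>finite F\<close> F_sub unfolding F0_def inj_on_def by (auto simp: prod_eq_iff)
  have "(\<Sum>k\<in>F0. sm (c k) (e r0 (snd k))) \<in> Dsub G act r0"
  proof (rule section_layer_vanishes_imp_Dsub[OF h h_section \<open>finite F0\<close>])
    show "e r0 (snd k) \<in> G r0" if "k \<in> F0" for k
      using that e_closed unfolding F0_def by auto
    show "(\<Sum>k\<in>F0. c k * snd (h r0 (e r0 (snd k))) (r0, m)) = 0" for m
      using layer[of m] unfolding F0_def \<psi>_def by simp
  qed
  then have "c k = 0"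
    using quot_basis_coeffs_zero[OF qb F0] k unfolding F0_def by blast
  with \<open>c k \<noteq> 0\<close> show False ..
qed

end

theorem proposition3p17:
  fixes G :: "'p::lattice_ab_group_add \<Rightarrow> 'm::ab_group_add set"
    and sm :: "'r::idom \<Rightarrow> 'm \<Rightarrow> 'm"
    and act :: "'p \<Rightarrow> 'p \<Rightarrow> 'm \<Rightarrow> 'm"
    and b :: "'p \<Rightarrow> nat"
    and e :: "'p \<Rightarrow> nat \<Rightarrow> 'm"
    and i :: 'p
  assumes "is_pid TYPE('r)"
    and "gmod G sm act"
    and "graded_projective G sm act"
    and "\<forall>a. fin_gen_R (G a) sm"
    and "\<forall>r. quot_basis G sm act r (b r) (e r)"
  shows "\<forall>F c. finite F \<longrightarrow> F \<subseteq> {(r, j). r < i \<and> 1 \<le> j \<and> j \<le> b r} \<longrightarrow>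
           (\<Sum>(r, j)\<in>F. sm (c (r, j)) (act r i (e r j))) = 0 \<longrightarrow>
           (\<forall>(r, j)\<in>F. c (r, j) = 0)"
proof (intro allI impI)
  interpret graded_module G sm act
    by unfold_locales (rule assms(2))
  fix F and c :: "'p \<times> nat \<Rightarrow> 'r"
  assume "finite F" and "F \<subseteq> {(r, j). r < i \<and> 1 \<le> j \<and> j \<le> b r}"
    and "(\<Sum>(r, j)\<in>F. sm (c (r, j)) (act r i (e r j))) = 0"
  from shifted_quot_basis_independent[OF assms(3) assms(5)[rule_format] this]
  show "\<forall>(r, j)\<in>F. c (r, j) = 0"
    by auto
qed

end
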